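(* Let $G$ be an $\alpha_i$-metric graph ($i\ge 0$ an integer). Then for every vertex $v\in V\setminus C(G)$, $loc(v)\le i+1$.
   Context: All graphs $G=(V,E)$ are finite, connected, unweighted, undirected, simple; $d(u,v)$ is the shortest-path distance. $I(u,v)=\{x: d(u,x)+d(x,v)=d(u,v)\}$. A graph is $\alpha_i$-metric if for all vertices $u,v,w,x$: whenever $v\in I(u,w)$, $w\in I(v,x)$ and $v,w$ are adjacent, then $d(u,x)\ge d(u,v)+d(v,x)-i$. $e(v)=\max_u d(u,v)$, $rad(G)=\min_v e(v)$, $C(G)=\{v:e(v)=rad(G)\}$. For $v\notin C(G)$, the locality is $loc(v)=\min\{d(v,x): x\in V,\ e(x)<e(v)\}$. *)

theory Defs
  imports Main
begin

definition graph :: "'a set \<Rightarrow> ('a \<Rightarrow> 'a \<Rightarrow> bool) \<Rightarrow> bool" where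
  "graph V E \<longleftrightarrow> finite V \<and> V \<noteq> {} \<and>
     (\<forall>u v. E u v \<longrightarrow> u \<in> V \<and> v \<in> V) \<and>
     (\<forall>u v. E u v \<longrightarrow> E v u) \<and> (\<forall>v. \<not> E v v)"

definition walk_len :: "'a set \<Rightarrow> ('a \<Rightarrow> 'a \<Rightarrow> bool) \<Rightarrow> nat \<Rightarrow> 'a \<Rightarrow> 'a \<Rightarrow> bool" where
  "walk_len V E n u v \<longleftrightarrow> (\<exists>xs. length xs = Suc n \<and> xs ! 0 = u \<and> xs ! n = v \<and>
      set xs \<subseteq> V \<and> (\<forall>k<n. E (xs ! k) (xs ! Suc k)))"

definition connected_graph :: "'a set \<Rightarrow> ('a \<Rightarrow> 'a \<Rightarrow> bool) \<Rightarrow> bool" where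
  "connected_graph V E \<longleftrightarrow> graph V E \<and> (\<forall>u\<in>V. \<forall>v\<in>V. \<exists>n. walk_len V E n u v)"

definition gdist :: "'a set \<Rightarrow> ('a \<Rightarrow> 'a \<Rightarrow> bool) \<Rightarrow> 'a \<Rightarrow> 'a \<Rightarrow> nat" where
  "gdist V E u v = (LEAST n. walk_len V E n u v)"

definition interval :: "'a set \<Rightarrow> ('a \<Rightarrow> 'a \<Rightarrow> bool) \<Rightarrow> 'a \<Rightarrow> 'a \<Rightarrow> 'a set" where
  "interval V E u v = {x \<in> V. gdist V E u x + gdist V E x v = gdist V E u v}"

definition alpha_metric :: "nat \<Rightarrow> 'a set \<Rightarrow> ('a \<Rightarrow> 'a \<Rightarrow> bool) \<Rightarrow> bool" where
  "alpha_metric i V E \<longleftrightarrow> (\<forall>u\<in>V. \<forall>v\<in>V. \<forall>w\<in>V. \<forall>x\<in>V.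
      v \<in> interval V E u w \<and> w \<in> interval V E v x \<and> E v w \<longrightarrow>
      int (gdist V E u x) \<ge> int (gdist V E u v) + int (gdist V E v x) - int i)"

definition ecc :: "'a set \<Rightarrow> ('a \<Rightarrow> 'a \<Rightarrow> bool) \<Rightarrow> 'a \<Rightarrow> nat" where
  "ecc V E v = Max ((\<lambda>u. gdist V E u v) ` V)"

definition rad :: "'a set \<Rightarrow> ('a \<Rightarrow> 'a \<Rightarrow> bool) \<Rightarrow> nat" where
  "rad V E = Min (ecc V E ` V)"

definition center :: "'a set \<Rightarrow> ('a \<Rightarrow> 'a \<Rightarrow> bool) \<Rightarrow> 'a set" where
  "center V E = {v \<in> V. ecc V E v = rad V E}"

definition loc :: "'a set \<Rightarrow> ('a \<Rightarrow> 'a \<Rightarrow> bool) \<Rightarrow> 'a \<Rightarrow> nat" where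
  "loc V E v = Min {gdist V E v x | x. x \<in> V \<and> ecc V E x < ecc V E v}"

end

theory Submission
  imports Defs
begin

text \<open>Let x be a vertex of smaller eccentricity nearest to v, and y the neighbour of x on a
 shortest path from v to x. By minimality e(y) \<ge> e(v) > e(x), so for a vertex u farthest from y
 we get d(u,x) = d(u,y) - 1: the edge yx continues the geodesic from v to y by a geodesic from
 x to u. The \<alpha>-metric condition with parameter i then gives
 e(v) \<ge> d(v,u) \<ge> d(v,y) + e(y) - i \<ge> d(v,y) + e(v) - i, hence loc(v) = d(v,y) + 1 \<le> i + 1.\<close>

lemma walk_len_0_iff: "walk_len V E 0 u v \<longleftrightarrow> u = v \<and> u \<in> V"
proof
  assume "walk_len V E 0 u v"
  then obtain xs where "length xs = Suc 0" "xs ! 0 = u" "xs ! 0 = v" "set xs \<subseteq> V"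
    unfolding walk_len_def by blast
  then show "u = v \<and> u \<in> V" by (metis nth_mem subsetD zero_less_Suc)
next
  assume "u = v \<and> u \<in> V"
  then show "walk_len V E 0 u v"
    unfolding walk_len_def by (intro exI[of _ "[u]"]) auto
qed

lemma walk_len_Suc_iff:
  "walk_len V E (Suc n) u w \<longleftrightarrow> (\<exists>v. walk_len V E n u v \<and> E v w \<and> w \<in> V)"
proof
  assume "walk_len V E (Suc n) u w"
  then obtain xs where xs: "length xs = Suc (Suc n)" "xs ! 0 = u" "xs ! Suc n = w"
    "set xs \<subseteq> V" "\<forall>k<Suc n. E (xs ! k) (xs ! Suc k)"
    unfolding walk_len_def by blast
  have "walk_len V E n u (xs ! n)"
    unfolding walk_len_def
    using xs by (intro exI[of _ "butlast xs"]) (auto simp: nth_butlast dest: in_set_butlastD)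
  moreover have "w \<in> V" using xs by (metis lessI nth_mem subsetD)
  ultimately show "\<exists>v. walk_len V E n u v \<and> E v w \<and> w \<in> V" using xs by blast
next
  assume "\<exists>v. walk_len V E n u v \<and> E v w \<and> w \<in> V"
  then obtain v xs where xs: "length xs = Suc n" "xs ! 0 = u" "xs ! n = v" "set xs \<subseteq> V"
    "\<forall>k<n. E (xs ! k) (xs ! Suc k)" and vw: "E v w" "w \<in> V"
    unfolding walk_len_def by blast
  have "\<forall>k<Suc n. E ((xs @ [w]) ! k) ((xs @ [w]) ! Suc k)"
    using xs vw by (auto simp: nth_append less_Suc_eq)
  with xs vw show "walk_len V E (Suc n) u w"
    unfolding walk_len_def by (intro exI[of _ "xs @ [w]"]) (auto simp: nth_append)
qed

lemma walk_len_endpoints: "walk_len V E n u v \<Longrightarrow> u \<in> V \<and> v \<in> V"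
  unfolding walk_len_def by (metis lessI nth_mem subsetD zero_less_Suc)

lemma walk_len_trans:
  "walk_len V E m u v \<Longrightarrow> walk_len V E n v w \<Longrightarrow> walk_len V E (m + n) u w"
proof (induction n arbitrary: w)
  case 0
  then show ?case by (simp add: walk_len_0_iff)
next
  case (Suc n)
  then show ?case by (auto simp: walk_len_Suc_iff)
qed

lemma walk_len_sym:
  assumes sym: "\<And>a b. E a b \<Longrightarrow> E b a" and "walk_len V E n u v"
  shows "walk_len V E n v u"
proof -
  obtain xs where xs: "length xs = Suc n" "xs ! 0 = u" "xs ! n = v" "set xs \<subseteq> V"
    "\<forall>k<n. E (xs ! k) (xs ! Suc k)"
    using assms(2) unfolding walk_len_def by blast
  have "E (rev xs ! k) (rev xs ! Suc k)" if "k < n" for k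
  proof -
    have "E (xs ! (n - Suc k)) (xs ! Suc (n - Suc k))" using xs(5) that by simp
    then show ?thesis using xs(1) that sym by (simp add: rev_nth Suc_diff_Suc)
  qed
  with xs show ?thesis
    unfolding walk_len_def by (intro exI[of _ "rev xs"]) (simp add: rev_nth)
qed

lemma gdist_le_walk_len: "walk_len V E n u v \<Longrightarrow> gdist V E u v \<le> n"
  unfolding gdist_def by (rule Least_le)

context
  fixes V :: "'a set" and E :: "'a \<Rightarrow> 'a \<Rightarrow> bool"
  assumes connected: "connected_graph V E"
begin

lemma finite_vertices: "finite V"
  using connected unfolding connected_graph_def graph_def by blast

lemma walk_len_gdist: "u \<in> V \<Longrightarrow> v \<in> V \<Longrightarrow> walk_len V E (gdist V E u v) u v"
  using connected unfolding connected_graph_def gdist_def by (meson LeastI)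

lemma gdist_commute: "u \<in> V \<Longrightarrow> v \<in> V \<Longrightarrow> gdist V E u v = gdist V E v u"
proof -
  assume uv: "u \<in> V" "v \<in> V"
  have sym: "\<And>a b. E a b \<Longrightarrow> E b a"
    using connected unfolding connected_graph_def graph_def by blast
  show ?thesis
    using gdist_le_walk_len[OF walk_len_sym[OF sym walk_len_gdist[OF uv]]]
      gdist_le_walk_len[OF walk_len_sym[OF sym walk_len_gdist[OF uv(2,1)]]]
    by simp
qed

lemma gdist_triangle:
  "u \<in> V \<Longrightarrow> v \<in> V \<Longrightarrow> w \<in> V \<Longrightarrow> gdist V E u w \<le> gdist V E u v + gdist V E v w"
  by (meson gdist_le_walk_len walk_len_gdist walk_len_trans)

lemma gdist_edge: "E a b \<Longrightarrow> gdist V E a b = 1"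
proof -
  assume ab: "E a b"
  have "a \<in> V" "b \<in> V" "a \<noteq> b"
    using connected ab unfolding connected_graph_def graph_def by blast+
  then have "gdist V E a b \<noteq> 0" using walk_len_gdist walk_len_0_iff by metis
  moreover have "walk_len V E 1 a b"
    using ab \<open>a \<in> V\<close> \<open>b \<in> V\<close> by (auto simp: walk_len_Suc_iff walk_len_0_iff)
  ultimately show ?thesis using gdist_le_walk_len by fastforce
qed

lemma gdist_Suc_predecessor:
  assumes "u \<in> V" "x \<in> V" "gdist V E u x = Suc k"
  obtains y where "y \<in> V" "E y x" "gdist V E u y = k"
proof -
  obtain y where y: "walk_len V E k u y" "E y x"
    using walk_len_gdist[OF assms(1,2)] assms(3) by (auto simp: walk_len_Suc_iff)
  have "y \<in> V" using walk_len_endpoints[OF y(1)] by blast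
  have "gdist V E u y \<le> k" using gdist_le_walk_len[OF y(1)] .
  moreover have "gdist V E u x \<le> gdist V E u y + gdist V E y x"
    using gdist_triangle assms \<open>y \<in> V\<close> by blast
  ultimately have "gdist V E u y = k" using gdist_edge[OF y(2)] assms(3) by linarith
  with \<open>y \<in> V\<close> y(2) show thesis by (rule that)
qed

lemma gdist_le_ecc: "u \<in> V \<Longrightarrow> gdist V E u y \<le> ecc V E y"
  unfolding ecc_def using finite_vertices by (intro Max_ge) auto

lemma ecc_attained: "\<exists>u\<in>V. gdist V E u y = ecc V E y"
proof -
  have "V \<noteq> {}" using connected unfolding connected_graph_def graph_def by blast
  then have "ecc V E y \<in> (\<lambda>u. gdist V E u y) ` V"
    unfolding ecc_def using finite_vertices by (intro Max_in) auto
  then show ?thesis by auto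
qed

lemma ecc_less_if_notin_center:
  assumes "v \<in> V" "v \<notin> center V E"
  obtains c where "c \<in> V" "ecc V E c < ecc V E v"
proof -
  have "V \<noteq> {}" using assms(1) by blast
  then have "rad V E \<in> ecc V E ` V"
    unfolding rad_def using finite_vertices by (intro Min_in) auto
  then obtain c where "c \<in> V" "ecc V E c = rad V E" by auto
  moreover have "rad V E \<le> ecc V E v"
    unfolding rad_def using finite_vertices assms(1) by (intro Min_le) auto
  ultimately show thesis using assms that unfolding center_def by fastforce
qed

lemma loc_le_gdist: "x \<in> V \<Longrightarrow> ecc V E x < ecc V E v \<Longrightarrow> loc V E v \<le> gdist V E v x"
  unfolding loc_def using finite_vertices by (intro Min_le) auto

lemma loc_attained:
  assumes "v \<in> V" "v \<notin> center V E"
  obtains x where "x \<in> V" "ecc V E x < ecc V E v" "gdist V E v x = loc V E v"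
proof -
  let ?S = "{gdist V E v x | x. x \<in> V \<and> ecc V E x < ecc V E v}"
  have "finite ?S" using finite_vertices by auto
  moreover have "?S \<noteq> {}" using ecc_less_if_notin_center[OF assms] by blast
  ultimately have "loc V E v \<in> ?S" unfolding loc_def by (rule Min_in)
  then show thesis using that by force
qed

lemma alpha_metric_ecc_drop:
  assumes alpha: "alpha_metric i V E" and "v \<in> V" "x \<in> V" "E y x"
    and yI: "y \<in> interval V E v x" and ecc_xy: "ecc V E x < ecc V E y"
  shows "gdist V E v y + ecc V E y \<le> ecc V E v + i"
proof -
  have "y \<in> V" using yI unfolding interval_def by blast
  obtain u where "u \<in> V" and uy: "gdist V E u y = ecc V E y" using ecc_attained by blast
  have "gdist V E u x \<le> ecc V E x" using gdist_le_ecc[OF \<open>u \<in> V\<close>] .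
  moreover have "gdist V E u y \<le> gdist V E u x + gdist V E x y"
    using gdist_triangle \<open>u \<in> V\<close> \<open>x \<in> V\<close> \<open>y \<in> V\<close> by blast
  moreover have "gdist V E y x = 1" "gdist V E x y = 1"
    using gdist_edge[OF \<open>E y x\<close>] gdist_commute[OF \<open>x \<in> V\<close> \<open>y \<in> V\<close>] by auto
  ultimately have "gdist V E y x + gdist V E x u = gdist V E y u"
    using uy ecc_xy gdist_commute \<open>u \<in> V\<close> \<open>x \<in> V\<close> \<open>y \<in> V\<close> by fastforce
  then have "x \<in> interval V E y u" unfolding interval_def using \<open>x \<in> V\<close> by blast
  then have "int (gdist V E v u) \<ge> int (gdist V E v y) + int (gdist V E y u) - int i"
    using alpha yI \<open>E y x\<close> \<open>v \<in> V\<close> \<open>x \<in> V\<close> \<open>y \<in> V\<close> \<open>u \<in> V\<close>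
    unfolding alpha_metric_def by blast
  moreover have "gdist V E v u \<le> ecc V E v"
    using gdist_le_ecc[OF \<open>u \<in> V\<close>] gdist_commute \<open>u \<in> V\<close> \<open>v \<in> V\<close> by metis
  ultimately show ?thesis using uy gdist_commute \<open>u \<in> V\<close> \<open>y \<in> V\<close> by fastforce
qed

end

theorem lemma7:
  fixes V :: "'a set" and E :: "'a \<Rightarrow> 'a \<Rightarrow> bool" and i :: nat and v :: 'a
  assumes "connected_graph V E"
    and "alpha_metric i V E"
    and "v \<in> V" and "v \<notin> center V E"
  shows "loc V E v \<le> i + 1"
proof -
  note connected = assms(1)
  obtain x where x: "x \<in> V" "ecc V E x < ecc V E v" "gdist V E v x = loc V E v"
    using loc_attained[OF connected assms(3,4)] .
  show ?thesis
  proof (cases "loc V E v")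
    case (Suc k)
    then obtain y where y: "y \<in> V" "E y x" "gdist V E v y = k"
      using gdist_Suc_predecessor[OF connected assms(3) x(1)] x(3) by metis
    have "ecc V E v \<le> ecc V E y"
      using loc_le_gdist[OF connected y(1), of v] y(3) Suc by fastforce
    moreover have "y \<in> interval V E v x"
      unfolding interval_def using y x(3) Suc gdist_edge[OF connected y(2)] by simp
    ultimately have "k + ecc V E y \<le> ecc V E v + i"
      using alpha_metric_ecc_drop[OF connected assms(2,3) x(1) y(2)] x(2) y(3) by fastforce
    with \<open>ecc V E v \<le> ecc V E y\<close> Suc show ?thesis by linarith
  qed simp
qed

end
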